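(* Let $w\in G(e,e,n)$. Define matrices $w_n,w_{n-1},\dots,w_1$ recursively: $w_n=w$; for $i$ from $n$ down to $2$, let $c_i$ be the unique column index with $a_i:=w_i[i,c_i]\neq 0$, and let $w_{i-1}$ be the $(i-1)\times(i-1)$ matrix obtained from $w_i$ by deleting row $i$ and column $c_i$ and then multiplying the first column of the resulting matrix by $a_i$. For $2\le i\le n$ put $L_i=i-c_i$ if $a_i=1$; $L_i=i-1$ if $a_i\neq 1$ and $c_i=1$; $L_i=i+c_i-2$ if $a_i\neq1$ and $c_i\ge 2$. Then $\ell(w)=\sum_{i=2}^n L_i$. Moreover, a reduced expression of $w$ over $X$ is given by the concatenation $R_2R_3\cdots R_n$, where (writing $s_2:=t_0$) $R_i=s_i s_{i-1}\cdots s_{c_i+1}$ if $a_i=1$ (empty if $c_i=i$), and if $a_i=\zeta_e^{k}$ with $k\not\equiv 0$: $R_i=s_i\cdots s_3\,t_k$ if $c_i=1$, $R_i=s_i\cdots s_3\,t_k t_0$ if $c_i=2$, $R_i=s_i\cdots s_3\,t_kt_0\,s_3\cdots s_{c_i}$ if $c_i\ge 3$.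
   Context: Let $e\ge 2$, $n\ge 2$ be integers, $\zeta_e=e^{2\pi i/e}$, and $\mu_e$ the group of $e$-th roots of unity. $G(e,e,n)$ is the group of $n\times n$ monomial matrices (exactly one nonzero entry in each row and column) with nonzero entries in $\mu_e$ whose product of nonzero entries is $1$. For $w$ a matrix, $w[i,c]$ is its $(i,c)$ entry. For $i\in\mathbb{Z}/e\mathbb{Z}$, $t_i\in G(e,e,n)$ is the matrix with $(1,2)$ entry $\zeta_e^{-i}$, $(2,1)$ entry $\zeta_e^{i}$, $(j,j)$ entry $1$ for $3\le j\le n$, all other entries $0$. For $3\le j\le n$, $s_j$ is the permutation matrix of the transposition exchanging $j-1$ and $j$. The set $X=\{t_0,\dots,t_{e-1},s_3,\dots,s_n\}$ generates $G(e,e,n)$, and $\ell(w)$ denotes the minimal number of elements of $X$ whose product is $w$; a reduced expression is a word over $X$ of length $\ell(w)$ representing $w$. *)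

theory Defs
  imports Complex_Main
begin

text \<open>Square matrices of size n are functions nat => nat => complex, indexed by
  1..n (rows and columns), and equal to 0 outside the index square.\<close>

type_synonym cmat = "nat \<Rightarrow> nat \<Rightarrow> complex"

definition zeta :: "nat \<Rightarrow> complex" where
  "zeta e = cis (2 * pi / real e)"

definition mat_mult :: "nat \<Rightarrow> cmat \<Rightarrow> cmat \<Rightarrow> cmat" where
  "mat_mult n A B = (\<lambda>i j. if i \<in> {1..n} \<and> j \<in> {1..n}
      then (\<Sum>k=1..n. A i k * B k j) else 0)"

definition ident :: "nat \<Rightarrow> cmat" where
  "ident n = (\<lambda>i j. if i \<in> {1..n} \<and> i = j then 1 else 0)"

definition word_eval :: "nat \<Rightarrow> cmat list \<Rightarrow> cmat" where
  "word_eval n ws = foldr (mat_mult n) ws (ident n)"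

definition Geen :: "nat \<Rightarrow> nat \<Rightarrow> cmat set" where
  "Geen e n = {w.
     (\<forall>i j. \<not> (i \<in> {1..n} \<and> j \<in> {1..n}) \<longrightarrow> w i j = 0) \<and>
     (\<forall>i\<in>{1..n}. \<exists>!j. j \<in> {1..n} \<and> w i j \<noteq> 0) \<and>
     (\<forall>j\<in>{1..n}. \<exists>!i. i \<in> {1..n} \<and> w i j \<noteq> 0) \<and>
     (\<forall>i j. w i j \<noteq> 0 \<longrightarrow> w i j ^ e = 1) \<and>
     (\<Prod>p\<in>{p\<in>{1..n}\<times>{1..n}. w (fst p) (snd p) \<noteq> 0}. w (fst p) (snd p)) = 1}"

definition tgen :: "nat \<Rightarrow> nat \<Rightarrow> int \<Rightarrow> cmat" where
  "tgen e n k = (\<lambda>r c.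
     if r = 1 \<and> c = 2 then zeta e powi (- k)
     else if r = 2 \<and> c = 1 then zeta e powi k
     else if 3 \<le> r \<and> r \<le> n \<and> r = c then 1 else 0)"

definition sgen :: "nat \<Rightarrow> nat \<Rightarrow> cmat" where
  "sgen n j = (\<lambda>r c.
     if r \<in> {1..n} \<and> c \<in> {1..n} \<and>
        c = (if r = j - 1 then j else if r = j then j - 1 else r) then 1 else 0)"

definition Xgens :: "nat \<Rightarrow> nat \<Rightarrow> cmat set" where
  "Xgens e n = {tgen e n (int k) | k. k < e} \<union> {sgen n j | j. 3 \<le> j \<and> j \<le> n}"

definition len :: "nat \<Rightarrow> nat \<Rightarrow> cmat \<Rightarrow> nat" where
  "len e n w = (LEAST k. \<exists>ws. set ws \<subseteq> Xgens e n \<and> length ws = k \<and> word_eval n ws = w)"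

definition reduced_expr :: "nat \<Rightarrow> nat \<Rightarrow> cmat \<Rightarrow> cmat list \<Rightarrow> bool" where
  "reduced_expr e n w ws \<longleftrightarrow>
     set ws \<subseteq> Xgens e n \<and> word_eval n ws = w \<and> length ws = len e n w"

definition colidx :: "nat \<Rightarrow> cmat \<Rightarrow> nat" where
  "colidx i M = (THE c. c \<in> {1..i} \<and> M i c \<noteq> 0)"

definition reduce :: "nat \<Rightarrow> cmat \<Rightarrow> cmat" where
  "reduce i M = (let c = colidx i M; a = M i c in
     (\<lambda>r q. if r \<in> {1..i-1} \<and> q \<in> {1..i-1}
        then M r (if q < c then q else q + 1) * (if q = 1 then a else 1) else 0))"

fun down :: "cmat \<Rightarrow> nat \<Rightarrow> nat \<Rightarrow> cmat" where
  "down w n 0 = w"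
| "down w n (Suc d) = reduce (n - d) (down w n d)"

definition wi :: "cmat \<Rightarrow> nat \<Rightarrow> nat \<Rightarrow> cmat" where
  "wi w n i = down w n (n - i)"

definition ci :: "cmat \<Rightarrow> nat \<Rightarrow> nat \<Rightarrow> nat" where
  "ci w n i = colidx i (wi w n i)"

definition ai :: "cmat \<Rightarrow> nat \<Rightarrow> nat \<Rightarrow> complex" where
  "ai w n i = wi w n i i (ci w n i)"

definition Li :: "cmat \<Rightarrow> nat \<Rightarrow> nat \<Rightarrow> nat" where
  "Li w n i = (if ai w n i = 1 then i - ci w n i
               else if ci w n i = 1 then i - 1
               else i + ci w n i - 2)"

definition kexp :: "nat \<Rightarrow> complex \<Rightarrow> nat" where
  "kexp e a = (THE k. k < e \<and> zeta e ^ k = a)"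

definition sg :: "nat \<Rightarrow> nat \<Rightarrow> nat \<Rightarrow> cmat" where
  "sg e n j = (if j = 2 then tgen e n 0 else sgen n j)"

definition Ri :: "nat \<Rightarrow> cmat \<Rightarrow> nat \<Rightarrow> nat \<Rightarrow> cmat list" where
  "Ri e w n i = (let c = ci w n i; a = ai w n i; k = int (kexp e a);
                     pre = map (sg e n) (rev [3..<i+1]) in
     if a = 1 then map (sg e n) (rev [c+1..<i+1])
     else if c = 1 then pre @ [tgen e n k]
     else if c = 2 then pre @ [tgen e n k, tgen e n 0]
     else pre @ [tgen e n k, tgen e n 0] @ map (sg e n) [3..<c+1])"

end

theory Submission
  imports Defs "HOL-Combinatorics.Transposition"
begin

text \<open>
  An element of G(e,e,n) is a monomial matrix: row r carries a single entry x r, in column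
  \<sigma> r.  The data of the recursion can be read off (\<sigma>, x) directly: c_i is the rank of \<sigma> i
  among \<sigma> 1, ..., \<sigma> i, and a_i is x i, except that for c_i = 1 the first column has absorbed
  the entries of all deleted rows and a_i = x i * ... * x n.  So the sum of the L_i is a
  statistic of (\<sigma>, x).

  Lower bound: multiplying by s_j or t_k on the left exchanges two adjacent rows (t_k also
  rescales them), which changes only the summands at these two rows, and by at most one in
  total.  The identity has statistic 0, so every word for w is at least as long as the sum.

  Upper bound: the prefix R_2 ... R_i evaluates to w_i extended by the identity on the rows
  below i, because multiplying w_(i-1) (extended likewise) by R_i reinserts the last row and
  column of w_i.  For i = n this is a word for w of length exactly the sum of the L_i.
\<close>

definition monomial_mat :: "nat \<Rightarrow> (nat \<Rightarrow> nat) \<Rightarrow> (nat \<Rightarrow> complex) \<Rightarrow> cmat" where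
  "monomial_mat n \<sigma> x = (\<lambda>r c. if r \<in> {1..n} \<and> c = \<sigma> r then x r else 0)"

lemma mat_mult_monomial_mat:
  assumes "\<sigma> ` {1..n} \<subseteq> {1..n}" "\<tau> ` {1..n} \<subseteq> {1..n}"
  shows "mat_mult n (monomial_mat n \<sigma> x) (monomial_mat n \<tau> y)
    = monomial_mat n (\<tau> \<circ> \<sigma>) (\<lambda>r. x r * y (\<sigma> r))"
proof (intro ext)
  fix r c
  show "mat_mult n (monomial_mat n \<sigma> x) (monomial_mat n \<tau> y) r c
    = monomial_mat n (\<tau> \<circ> \<sigma>) (\<lambda>r. x r * y (\<sigma> r)) r c"
  proof (cases "r \<in> {1..n} \<and> c \<in> {1..n}")
    case True
    then have "\<sigma> r \<in> {1..n}" using assms(1) by blast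
    have "(\<Sum>k=1..n. monomial_mat n \<sigma> x r k * monomial_mat n \<tau> y k c)
        = (\<Sum>k=1..n. if k = \<sigma> r then x r * (if c = \<tau> k then y k else 0) else 0)"
      using True by (intro sum.cong) (auto simp: monomial_mat_def)
    also have "\<dots> = x r * (if c = \<tau> (\<sigma> r) then y (\<sigma> r) else 0)"
      using \<open>\<sigma> r \<in> {1..n}\<close> by (simp add: sum.delta')
    finally show ?thesis using True by (simp add: mat_mult_def monomial_mat_def)
  next
    case False
    have "r \<in> {1..n} \<Longrightarrow> \<tau> (\<sigma> r) \<in> {1..n}" using assms by blast
    then show ?thesis using False by (auto simp: mat_mult_def monomial_mat_def)
  qed
qed

lemma ident_eq_monomial_mat: "ident n = monomial_mat n id (\<lambda>_. 1)"
  by (auto simp: ident_def monomial_mat_def fun_eq_iff)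

lemma monomial_mat_cong:
  assumes "\<And>r. r \<in> {1..n} \<Longrightarrow> \<sigma> r = \<sigma>' r \<and> x r = x' r"
  shows "monomial_mat n \<sigma> x = monomial_mat n \<sigma>' x'"
  using assms by (auto simp: monomial_mat_def fun_eq_iff)

lemma monomial_mat_eqD:
  assumes "monomial_mat n \<sigma> x = monomial_mat n \<sigma>' x'" "r \<in> {1..n}" "x r \<noteq> 0"
  shows "\<sigma> r = \<sigma>' r \<and> x r = x' r"
proof -
  have "monomial_mat n \<sigma> x r (\<sigma> r) = monomial_mat n \<sigma>' x' r (\<sigma> r)" using assms(1) by simp
  then show ?thesis using assms(2,3) by (auto simp: monomial_mat_def split: if_splits)
qed

lemma mat_mult_assoc: "mat_mult n (mat_mult n A B) C = mat_mult n A (mat_mult n B C)"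
proof (intro ext)
  fix i j
  show "mat_mult n (mat_mult n A B) C i j = mat_mult n A (mat_mult n B C) i j"
  proof (cases "i \<in> {1..n} \<and> j \<in> {1..n}")
    case True
    have "mat_mult n (mat_mult n A B) C i j = (\<Sum>k=1..n. \<Sum>l=1..n. A i l * B l k * C k j)"
      using True by (auto simp: mat_mult_def sum_distrib_right intro!: sum.cong)
    also have "\<dots> = (\<Sum>l=1..n. \<Sum>k=1..n. A i l * B l k * C k j)"
      by (rule sum.swap)
    also have "\<dots> = mat_mult n A (mat_mult n B C) i j"
      using True by (auto simp: mat_mult_def sum_distrib_left mult.assoc intro!: sum.cong)
    finally show ?thesis .
  qed (auto simp: mat_mult_def)
qed

lemma mat_mult_ident_left:
  assumes "\<And>i j. \<not> (i \<in> {1..n} \<and> j \<in> {1..n}) \<Longrightarrow> B i j = 0"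
  shows "mat_mult n (ident n) B = B"
proof (intro ext)
  fix i j
  show "mat_mult n (ident n) B i j = B i j"
  proof (cases "i \<in> {1..n} \<and> j \<in> {1..n}")
    case True
    have "(\<Sum>k=1..n. ident n i k * B k j) = (\<Sum>k=1..n. if k = i then B i j else 0)"
      using True by (intro sum.cong) (auto simp: ident_def)
    then show ?thesis using True by (simp add: mat_mult_def)
  qed (use assms in \<open>auto simp: mat_mult_def\<close>)
qed

lemma word_eval_Nil: "word_eval n [] = ident n"
  by (simp add: word_eval_def)

lemma word_eval_Cons: "word_eval n (g # ws) = mat_mult n g (word_eval n ws)"
  by (simp add: word_eval_def)

lemma word_eval_outside:
  "\<not> (i \<in> {1..n} \<and> j \<in> {1..n}) \<Longrightarrow> word_eval n ws i j = 0"
  by (cases ws) (auto simp: word_eval_def ident_def mat_mult_def)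

lemma word_eval_append:
  "word_eval n (xs @ ys) = mat_mult n (word_eval n xs) (word_eval n ys)"
proof (induction xs)
  case Nil
  have "mat_mult n (ident n) (word_eval n ys) = word_eval n ys"
    by (rule mat_mult_ident_left) (rule word_eval_outside)
  then show ?case by (simp add: word_eval_Nil)
next
  case (Cons g xs)
  then show ?case by (simp add: word_eval_Cons mat_mult_assoc)
qed

lemma word_eval_monomial_mat_single:
  "\<sigma> ` {1..n} \<subseteq> {1..n} \<Longrightarrow> word_eval n [monomial_mat n \<sigma> x] = monomial_mat n \<sigma> x"
  by (simp add: word_eval_Cons word_eval_Nil ident_eq_monomial_mat mat_mult_monomial_mat)

lemma tgen_eq_monomial_mat:
  "n \<ge> 2 \<Longrightarrow> tgen e n k = monomial_mat n (transpose 1 2)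
     (\<lambda>r. if r = 1 then zeta e powi (- k) else if r = 2 then zeta e powi k else 1)"
  by (auto simp: tgen_def monomial_mat_def transpose_def fun_eq_iff)

lemma sgen_eq_monomial_mat:
  "2 \<le> j \<Longrightarrow> j \<le> n \<Longrightarrow> sgen n j = monomial_mat n (transpose (j-1) j) (\<lambda>_. 1)"
  by (auto simp: sgen_def monomial_mat_def transpose_def fun_eq_iff)

lemma sg_eq_monomial_mat:
  "2 \<le> j \<Longrightarrow> j \<le> n \<Longrightarrow> sg e n j = monomial_mat n (transpose (j-1) j) (\<lambda>_. 1)"
  by (auto simp: sg_def sgen_eq_monomial_mat tgen_eq_monomial_mat cong: if_cong)

text \<open>
  Deleting the rows below i together with the columns they occupy renumbers the column \<sigma> r
  of a row r \<le> i as its rank among \<sigma> 1, ..., \<sigma> i; so col_rank \<sigma> i is c_i.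
\<close>

definition rank_le :: "(nat \<Rightarrow> nat) \<Rightarrow> nat \<Rightarrow> nat \<Rightarrow> nat" where
  "rank_le \<sigma> i v = card {l \<in> {1..i}. \<sigma> l \<le> v}"

definition col_rank :: "(nat \<Rightarrow> nat) \<Rightarrow> nat \<Rightarrow> nat" where
  "col_rank \<sigma> i = rank_le \<sigma> i (\<sigma> i)"

text \<open>
  This is a_i.  It is written through the rows above i; when all entries multiply to 1, the
  case c_i = 1 gives x i * ... * x n (reduced_entry_eq).
\<close>

definition reduced_entry :: "(nat \<Rightarrow> nat) \<Rightarrow> (nat \<Rightarrow> complex) \<Rightarrow> nat \<Rightarrow> complex" where
  "reduced_entry \<sigma> x i = (if col_rank \<sigma> i = 1 then inverse (\<Prod>l\<in>{1..<i}. x l) else x i)"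

definition step_length :: "nat \<Rightarrow> nat \<Rightarrow> bool \<Rightarrow> nat" where
  "step_length i c is_one = (if is_one then i - c else if c = 1 then i - 1 else i + c - 2)"

definition length_term :: "(nat \<Rightarrow> nat) \<Rightarrow> (nat \<Rightarrow> complex) \<Rightarrow> nat \<Rightarrow> nat" where
  "length_term \<sigma> x i = step_length i (col_rank \<sigma> i) (reduced_entry \<sigma> x i = 1)"

definition length_sum :: "nat \<Rightarrow> (nat \<Rightarrow> nat) \<Rightarrow> (nat \<Rightarrow> complex) \<Rightarrow> nat" where
  "length_sum n \<sigma> x = (\<Sum>i=2..n. length_term \<sigma> x i)"

lemma rank_le_Suc:
  "rank_le \<sigma> (Suc k) v = rank_le \<sigma> k v + (if \<sigma> (Suc k) \<le> v then 1 else 0)"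
proof -
  define S where "S = {l \<in> {1..k}. \<sigma> l \<le> v}"
  have "{l \<in> {1..Suc k}. \<sigma> l \<le> v} = (if \<sigma> (Suc k) \<le> v then insert (Suc k) S else S)"
    by (auto simp: S_def le_Suc_eq)
  moreover have "finite S" "Suc k \<notin> S" by (auto simp: S_def)
  ultimately show ?thesis unfolding rank_le_def S_def[symmetric] by simp
qed

lemma rank_le_mono: "v \<le> v' \<Longrightarrow> rank_le \<sigma> i v \<le> rank_le \<sigma> i v'"
  unfolding rank_le_def by (rule card_mono) auto

lemma rank_le_strict_mono:
  assumes "r \<in> {1..i}" "v < \<sigma> r"
  shows "rank_le \<sigma> i v < rank_le \<sigma> i (\<sigma> r)"
  unfolding rank_le_def
proof (rule psubset_card_mono)
  have "{l \<in> {1..i}. \<sigma> l \<le> v} \<subseteq> {l \<in> {1..i}. \<sigma> l \<le> \<sigma> r}" using assms by auto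
  moreover have "r \<in> {l \<in> {1..i}. \<sigma> l \<le> \<sigma> r}" "r \<notin> {l \<in> {1..i}. \<sigma> l \<le> v}" using assms by auto
  ultimately show "{l \<in> {1..i}. \<sigma> l \<le> v} \<subset> {l \<in> {1..i}. \<sigma> l \<le> \<sigma> r}"
    by blast
qed simp

lemma rank_le_le: "rank_le \<sigma> i v \<le> i"
proof -
  have "card {l \<in> {1..i}. \<sigma> l \<le> v} \<le> card {1..i}" by (rule card_mono) auto
  then show ?thesis by (simp add: rank_le_def)
qed

lemma rank_le_in_range:
  assumes "r \<in> {1..i}"
  shows "rank_le \<sigma> i (\<sigma> r) \<in> {1..i}"
proof -
  have "r \<in> {l \<in> {1..i}. \<sigma> l \<le> \<sigma> r}" using assms by simp
  then have "card {l \<in> {1..i}. \<sigma> l \<le> \<sigma> r} > 0" by (subst card_gt_0_iff) auto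
  then show ?thesis using rank_le_le[of \<sigma> i "\<sigma> r"] unfolding rank_le_def by auto
qed

lemma col_rank_in_range: "1 \<le> i \<Longrightarrow> col_rank \<sigma> i \<in> {1..i}"
  unfolding col_rank_def by (rule rank_le_in_range) simp

lemma length_sum_id: "length_sum n id (\<lambda>_. 1) = 0"
proof -
  have "col_rank id i = i" for i
  proof -
    have "{l \<in> {1..i}. id l \<le> id i} = {1..i}" by auto
    then show ?thesis unfolding col_rank_def rank_le_def by simp
  qed
  then show ?thesis by (simp add: length_sum_def length_term_def step_length_def reduced_entry_def)
qed

lemma length_sum_cong:
  assumes "\<And>r. r \<in> {1..n} \<Longrightarrow> \<sigma> r = \<sigma>' r \<and> x r = x' r"
  shows "length_sum n \<sigma> x = length_sum n \<sigma>' x'"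
proof -
  have "col_rank \<sigma> i = col_rank \<sigma>' i \<and> reduced_entry \<sigma> x i = reduced_entry \<sigma>' x' i"
    if "i \<in> {2..n}" for i
  proof -
    have "{l \<in> {1..i}. \<sigma> l \<le> \<sigma> i} = {l \<in> {1..i}. \<sigma>' l \<le> \<sigma>' i}"
      using assms that by auto
    moreover have "(\<Prod>l\<in>{1..<i}. x l) = (\<Prod>l\<in>{1..<i}. x' l)"
      using assms that by (intro prod.cong) auto
    ultimately show ?thesis
      using assms that by (simp add: reduced_entry_def col_rank_def rank_le_def)
  qed
  then show ?thesis unfolding length_sum_def length_term_def by (intro sum.cong) auto
qed

lemma
  assumes "1 \<le> a" "1 \<le> b" "i \<noteq> a" "i \<noteq> b" "a < i \<longleftrightarrow> b < i"
  shows col_rank_comp_transpose: "col_rank (\<sigma> \<circ> transpose a b) i = col_rank \<sigma> i"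
    and reduced_entry_comp_transpose:
      "reduced_entry (\<sigma> \<circ> transpose a b) (x \<circ> transpose a b) i = reduced_entry \<sigma> x i"
proof -
  let ?t = "transpose a b"
  have ti: "?t i = i" using assms by simp
  have mem: "?t l \<in> {1..i} \<longleftrightarrow> l \<in> {1..i}" for l
    using assms by (auto simp: transpose_def)
  have "?t ` {l \<in> {1..i}. \<sigma> (?t l) \<le> \<sigma> i} = {l \<in> {1..i}. \<sigma> l \<le> \<sigma> i}"
    by (simp only: set_eq_iff in_transpose_image_iff mem_Collect_eq transpose_involutory mem) simp
  then have "card {l \<in> {1..i}. \<sigma> (?t l) \<le> \<sigma> i} = card {l \<in> {1..i}. \<sigma> l \<le> \<sigma> i}"
    using card_image[OF inj_on_transpose] by metis
  then show col: "col_rank (\<sigma> \<circ> ?t) i = col_rank \<sigma> i"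
    by (simp add: col_rank_def rank_le_def ti)
  have "bij_betw ?t {1..<i} {1..<i}" using assms by (intro bij_betw_transpose_iff) auto
  then have "(\<Prod>l\<in>{1..<i}. x (?t l)) = (\<Prod>l\<in>{1..<i}. x l)"
    by (rule prod.reindex_bij_betw)
  then show "reduced_entry (\<sigma> \<circ> ?t) (x \<circ> ?t) i = reduced_entry \<sigma> x i"
    by (simp add: reduced_entry_def col ti)
qed

lemma col_rank_Suc: "col_rank \<sigma> (Suc k) = rank_le \<sigma> k (\<sigma> (Suc k)) + 1"
  by (simp add: col_rank_def rank_le_Suc)

text \<open>
  The summands at rows m+1 and m+2 before and after exchanging these rows: A and B are the
  ranks of their columns among the first m rows, and d tells which column lies further left.
\<close>

lemma step_length_adjacent_swap:
  fixes A B m :: nat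
  assumes "A \<le> m" "B \<le> m"
  shows "step_length (Suc m) (B + 1) (if B = 0 then p else v)
      + step_length (Suc (Suc m)) (A + (if d then 0 else 1) + 1)
          (if A + (if d then 0 else 1) = 0 then pv else u)
    \<le> step_length (Suc m) (A + 1) (if A = 0 then p else u)
      + step_length (Suc (Suc m)) (B + (if d then 1 else 0) + 1)
          (if B + (if d then 1 else 0) = 0 then pu else v) + 1"
  using assms unfolding step_length_def
  by (cases d; cases "A = 0"; cases "B = 0"; cases p; cases u; cases v; simp)

lemma length_term_transpose_adjacent:
  fixes m :: nat
  defines "t \<equiv> transpose (Suc m) (Suc (Suc m))"
  assumes "\<sigma> (Suc m) \<noteq> \<sigma> (Suc (Suc m))"
  shows "length_term (\<sigma> \<circ> t) (x \<circ> t) (Suc m) + length_term (\<sigma> \<circ> t) (x \<circ> t) (Suc (Suc m))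
    \<le> length_term \<sigma> x (Suc m) + length_term \<sigma> x (Suc (Suc m)) + 1"
proof -
  define A where "A = rank_le \<sigma> m (\<sigma> (Suc m))"
  define B where "B = rank_le \<sigma> m (\<sigma> (Suc (Suc m)))"
  define d where "d = (\<sigma> (Suc m) < \<sigma> (Suc (Suc m)))"
  define P where "P = (\<Prod>l\<in>{1..<Suc m}. x l)"
  have t_low: "t l = l" if "l \<le> m" for l using that by (simp add: t_def transpose_def)
  have t_pair: "t (Suc m) = Suc (Suc m)" "t (Suc (Suc m)) = Suc m" by (simp_all add: t_def)
  have rank_low: "rank_le (\<sigma> \<circ> t) m v = rank_le \<sigma> m v" for v
    unfolding rank_le_def using t_low by (intro arg_cong[where f=card]) auto
  have le_iff: "\<sigma> (Suc m) \<le> \<sigma> (Suc (Suc m)) \<longleftrightarrow> d" "\<sigma> (Suc (Suc m)) \<le> \<sigma> (Suc m) \<longleftrightarrow> \<not> d"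
    using assms(2) by (auto simp: d_def)
  have c: "col_rank \<sigma> (Suc m) = A + 1" "col_rank \<sigma> (Suc (Suc m)) = B + (if d then 1 else 0) + 1"
    "col_rank (\<sigma> \<circ> t) (Suc m) = B + 1" "col_rank (\<sigma> \<circ> t) (Suc (Suc m)) = A + (if d then 0 else 1) + 1"
    by (simp_all add: col_rank_Suc rank_le_Suc rank_low le_iff t_pair A_def B_def)
  have p: "(\<Prod>l\<in>{1..<Suc (Suc m)}. x l) = P * x (Suc m)" "(\<Prod>l\<in>{1..<Suc m}. (x \<circ> t) l) = P"
    "(\<Prod>l\<in>{1..<Suc (Suc m)}. (x \<circ> t) l) = P * x (Suc (Suc m))"
    using t_low t_pair by (simp_all add: P_def prod.atLeastLessThan_Suc)
  have e: "(reduced_entry \<sigma> x (Suc m) = 1) = (if A = 0 then inverse P = 1 else x (Suc m) = 1)"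
    "(reduced_entry \<sigma> x (Suc (Suc m)) = 1) = (if B + (if d then 1 else 0) = 0
       then inverse (P * x (Suc m)) = 1 else x (Suc (Suc m)) = 1)"
    "(reduced_entry (\<sigma> \<circ> t) (x \<circ> t) (Suc m) = 1) = (if B = 0 then inverse P = 1 else x (Suc (Suc m)) = 1)"
    "(reduced_entry (\<sigma> \<circ> t) (x \<circ> t) (Suc (Suc m)) = 1) = (if A + (if d then 0 else 1) = 0
       then inverse (P * x (Suc (Suc m))) = 1 else x (Suc m) = 1)"
    by (simp_all only: reduced_entry_def c p P_def[symmetric]) (simp_all add: t_pair)
  show ?thesis
    unfolding length_term_def c e
    by (rule step_length_adjacent_swap[where p = "inverse P = 1" and u = "x (Suc m) = 1"
          and v = "x (Suc (Suc m)) = 1" and pu = "inverse (P * x (Suc m)) = 1"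
          and pv = "inverse (P * x (Suc (Suc m))) = 1"])
      (simp_all add: A_def B_def rank_le_le)
qed

lemma length_sum_transpose_adjacent:
  assumes j: "3 \<le> j" "j \<le> n" and inj: "inj_on \<sigma> {1..n}"
  shows "length_sum n (\<sigma> \<circ> transpose (j-1) j) (x \<circ> transpose (j-1) j) \<le> length_sum n \<sigma> x + 1"
proof -
  define m where "m = j - 2"
  have m: "j = Suc (Suc m)" "j - 1 = Suc m" "1 \<le> m" using j by (simp_all add: m_def)
  define t where "t = transpose (Suc m) (Suc (Suc m))"
  define R where "R = {2..n} - {Suc m, Suc (Suc m)}"
  have split: "length_sum n \<tau> z
      = length_term \<tau> z (Suc m) + length_term \<tau> z (Suc (Suc m)) + sum (length_term \<tau> z) R" for \<tau> z
    using sum.subset_diff[of "{Suc m, Suc (Suc m)}" "{2..n}" "length_term \<tau> z"] j m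
    by (simp add: length_sum_def R_def)
  have "sum (length_term (\<sigma> \<circ> t) (x \<circ> t)) R = sum (length_term \<sigma> x) R"
  proof (rule sum.cong)
    fix i assume i: "i \<in> R"
    then have "Suc m < i \<longleftrightarrow> Suc (Suc m) < i" by (auto simp: R_def)
    then show "length_term (\<sigma> \<circ> t) (x \<circ> t) i = length_term \<sigma> x i" using i
      by (simp add: R_def t_def length_term_def col_rank_comp_transpose reduced_entry_comp_transpose)
  qed simp
  moreover have "\<sigma> (Suc m) \<noteq> \<sigma> (Suc (Suc m))"
  proof
    assume "\<sigma> (Suc m) = \<sigma> (Suc (Suc m))"
    then have "Suc m = Suc (Suc m)" by (rule inj_onD[OF inj]) (use j m in auto)
    then show False by simp
  qed
  ultimately have "length_sum n (\<sigma> \<circ> t) (x \<circ> t) \<le> length_sum n \<sigma> x + 1"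
    using length_term_transpose_adjacent[where m = m and \<sigma> = \<sigma> and x = x]
    unfolding split t_def by linarith
  then show ?thesis by (simp only: t_def m(2) m(1)[symmetric])
qed

lemma length_sum_transpose_12:
  assumes n: "2 \<le> n" and inj: "inj_on \<sigma> {1..n}"
    and y: "y 1 * y 2 = 1" "\<And>r. 3 \<le> r \<Longrightarrow> y r = 1"
  shows "length_sum n (\<sigma> \<circ> transpose 1 2) (\<lambda>r. y r * x (transpose 1 2 r)) \<le> length_sum n \<sigma> x + 1"
proof -
  define t where "t = transpose (1::nat) 2"
  define \<sigma>' where "\<sigma>' = \<sigma> \<circ> t"
  define x' where "x' = (\<lambda>r. y r * x (t r))"
  have other: "length_term \<sigma>' x' i = length_term \<sigma> x i" if "3 \<le> i" for i
  proof -
    have "(\<Prod>l\<in>{1..<i}. y l) = y 1 * y 2 * (\<Prod>l\<in>{3..<i}. y l)"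
      using that by (simp add: prod.atLeast_Suc_lessThan numeral_3_eq_3 numeral_2_eq_2)
    also have "\<dots> = 1" using y by simp
    finally have "(\<Prod>l\<in>{1..<i}. x' l) = (\<Prod>l\<in>{1..<i}. (x \<circ> t) l)"
      by (simp add: x'_def prod.distrib)
    then have "reduced_entry \<sigma>' x' i = reduced_entry \<sigma>' (x \<circ> t) i"
      using y(2)[OF that] by (simp add: reduced_entry_def x'_def)
    also have "\<dots> = reduced_entry \<sigma> x i"
      unfolding \<sigma>'_def t_def using that by (intro reduced_entry_comp_transpose) auto
    finally show ?thesis
      unfolding \<sigma>'_def t_def length_term_def using that by (simp add: col_rank_comp_transpose)
  qed
  have "\<sigma> 1 \<noteq> \<sigma> 2"
  proof
    assume "\<sigma> 1 = \<sigma> 2"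
    then have "(1::nat) = 2" by (rule inj_onD[OF inj]) (use n in auto)
    then show False by simp
  qed
  moreover have "col_rank \<tau> 2 = (if \<tau> 1 \<le> \<tau> 2 then 2 else 1)" for \<tau> :: "nat \<Rightarrow> nat"
    using col_rank_Suc[of \<tau> 1] rank_le_Suc[of \<tau> 0] by (simp add: rank_le_def numeral_2_eq_2)
  ultimately have "col_rank \<sigma> 2 = 1 \<or> col_rank \<sigma>' 2 = 1"
    by (auto simp: \<sigma>'_def t_def)
  moreover have "col_rank \<sigma> 2 \<le> 2" "col_rank \<sigma>' 2 \<le> 2"
    using col_rank_in_range[of 2] by auto
  ultimately have "length_term \<sigma>' x' 2 \<le> length_term \<sigma> x 2 + 1"
    by (auto simp: length_term_def step_length_def)
  moreover have "length_sum n \<tau> z = length_term \<tau> z 2 + (\<Sum>i=3..n. length_term \<tau> z i)" for \<tau> z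
    unfolding length_sum_def using sum.atLeast_Suc_atMost[OF n]
    by (simp add: numeral_3_eq_3 numeral_2_eq_2)
  ultimately show ?thesis
    using other unfolding \<sigma>'_def[symmetric] x'_def t_def[symmetric] by simp
qed

lemma Xgens_length_sum_step:
  assumes "g \<in> Xgens e n" "2 \<le> n"
  obtains a b y where "g = monomial_mat n (transpose a b) y" "a \<in> {1..n}" "b \<in> {1..n}"
    "\<And>r. y r \<noteq> 0"
    "\<And>\<sigma> x. inj_on \<sigma> {1..n} \<Longrightarrow>
       length_sum n (\<sigma> \<circ> transpose a b) (\<lambda>r. y r * x (transpose a b r)) \<le> length_sum n \<sigma> x + 1"
proof -
  consider (t) k where "g = tgen e n (int k)" | (s) j where "3 \<le> j" "j \<le> n" "g = sgen n j"
    using assms(1) unfolding Xgens_def by auto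
  then show ?thesis
  proof cases
    case t
    let ?y = "\<lambda>r::nat. if r = 1 then zeta e powi (- int k) else if r = 2 then zeta e powi (int k) else 1"
    show ?thesis
    proof (rule that)
      show "g = monomial_mat n (transpose 1 2) ?y" using t tgen_eq_monomial_mat[OF assms(2)] by simp
      show "length_sum n (\<sigma> \<circ> transpose 1 2) (\<lambda>r. ?y r * x (transpose 1 2 r)) \<le> length_sum n \<sigma> x + 1"
        if "inj_on \<sigma> {1..n}" for \<sigma> x
        by (rule length_sum_transpose_12[OF assms(2) that]) (auto simp: power_int_minus zeta_def)
    qed (use assms(2) in \<open>auto simp: zeta_def\<close>)
  next
    case s
    show ?thesis
    proof (rule that)
      show "g = monomial_mat n (transpose (j-1) j) (\<lambda>_. 1)" using s sgen_eq_monomial_mat by simp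
      show "length_sum n (\<sigma> \<circ> transpose (j-1) j) (\<lambda>r. 1 * x (transpose (j-1) j r)) \<le> length_sum n \<sigma> x + 1"
        if "inj_on \<sigma> {1..n}" for \<sigma> x
        using length_sum_transpose_adjacent[OF s(1,2) that] by (simp add: comp_def)
    qed (use s in auto)
  qed
qed

lemma exists_monomial_mat_length_sum_le:
  assumes "set ws \<subseteq> Xgens e n" "2 \<le> n"
  shows "\<exists>\<sigma> x. word_eval n ws = monomial_mat n \<sigma> x \<and> bij_betw \<sigma> {1..n} {1..n}
     \<and> (\<forall>r\<in>{1..n}. x r \<noteq> 0) \<and> length_sum n \<sigma> x \<le> length ws"
  using assms(1)
proof (induction ws)
  case Nil
  have "word_eval n [] = monomial_mat n id (\<lambda>_. 1)"
    by (simp add: word_eval_Nil ident_eq_monomial_mat)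
  then show ?case using length_sum_id[of n] by fastforce
next
  case (Cons g ws)
  then obtain \<sigma> x where IH: "word_eval n ws = monomial_mat n \<sigma> x" "bij_betw \<sigma> {1..n} {1..n}"
     "\<forall>r\<in>{1..n}. x r \<noteq> 0" "length_sum n \<sigma> x \<le> length ws" by auto
  from Cons.prems have "g \<in> Xgens e n" by simp
  then obtain a b y where g: "g = monomial_mat n (transpose a b) y" and ab: "a \<in> {1..n}" "b \<in> {1..n}"
    and y: "\<And>r. y r \<noteq> 0"
    and step: "\<And>\<sigma> x. inj_on \<sigma> {1..n} \<Longrightarrow>
       length_sum n (\<sigma> \<circ> transpose a b) (\<lambda>r. y r * x (transpose a b r)) \<le> length_sum n \<sigma> x + 1"
    using Xgens_length_sum_step[OF _ assms(2)] by blast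
  note bound = step[OF bij_betw_imp_inj_on[OF IH(2)], of x]
  show ?case
  proof (intro exI conjI)
    show "word_eval n (g # ws) = monomial_mat n (\<sigma> \<circ> transpose a b) (\<lambda>r. y r * x (transpose a b r))"
      unfolding word_eval_Cons g IH(1) using ab IH(2) by (intro mat_mult_monomial_mat) (auto simp: bij_betw_def)
    show "bij_betw (\<sigma> \<circ> transpose a b) {1..n} {1..n}"
      using ab IH(2) by (intro bij_betw_trans[of _ _ "{1..n}"]) auto
    show "\<forall>r\<in>{1..n}. y r * x (transpose a b r) \<noteq> 0"
      using IH(3) ab y by (auto simp: transpose_def)
    show "length_sum n (\<sigma> \<circ> transpose a b) (\<lambda>r. y r * x (transpose a b r)) \<le> length (g # ws)"
      using bound IH(4) by simp
  qed
qed

lemma length_sum_le_word_length: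
  assumes "set ws \<subseteq> Xgens e n" "2 \<le> n" "word_eval n ws = monomial_mat n \<sigma> x"
    and "\<And>r. r \<in> {1..n} \<Longrightarrow> x r \<noteq> 0"
  shows "length_sum n \<sigma> x \<le> length ws"
proof -
  obtain \<sigma>' x' where w: "word_eval n ws = monomial_mat n \<sigma>' x'" "\<forall>r\<in>{1..n}. x' r \<noteq> 0"
    and le: "length_sum n \<sigma>' x' \<le> length ws"
    using exists_monomial_mat_length_sum_le[OF assms(1,2)] by blast
  have "monomial_mat n \<sigma> x = monomial_mat n \<sigma>' x'" using w(1) assms(3) by simp
  then have "length_sum n \<sigma> x = length_sum n \<sigma>' x'"
    using assms(4) by (intro length_sum_cong) (blast dest: monomial_mat_eqD)
  then show ?thesis using le by simp
qed

lemma Geen_obtain_monomial_mat: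
  assumes "w \<in> Geen e n"
  obtains \<sigma> x where "w = monomial_mat n \<sigma> x" "bij_betw \<sigma> {1..n} {1..n}"
    "\<And>r. r \<in> {1..n} \<Longrightarrow> x r \<noteq> 0 \<and> x r ^ e = 1" "(\<Prod>r\<in>{1..n}. x r) = 1"
proof -
  have outside: "\<And>i j. \<not> (i \<in> {1..n} \<and> j \<in> {1..n}) \<Longrightarrow> w i j = 0"
    and row: "\<And>i. i \<in> {1..n} \<Longrightarrow> \<exists>!j. j \<in> {1..n} \<and> w i j \<noteq> 0"
    and col: "\<And>j. j \<in> {1..n} \<Longrightarrow> \<exists>!i. i \<in> {1..n} \<and> w i j \<noteq> 0"
    and root: "\<And>i j. w i j \<noteq> 0 \<Longrightarrow> w i j ^ e = 1"
    and prod: "(\<Prod>p\<in>{p\<in>{1..n}\<times>{1..n}. w (fst p) (snd p) \<noteq> 0}. w (fst p) (snd p)) = 1"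
    using assms unfolding Geen_def by simp_all
  define \<sigma> where "\<sigma> r = (THE c. c \<in> {1..n} \<and> w r c \<noteq> 0)" for r
  define x where "x r = w r (\<sigma> r)" for r
  have \<sigma>: "\<sigma> r \<in> {1..n} \<and> w r (\<sigma> r) \<noteq> 0" if "r \<in> {1..n}" for r
    unfolding \<sigma>_def by (rule theI'[OF row[OF that]])
  have \<sigma>_unique: "c = \<sigma> r" if "r \<in> {1..n}" "c \<in> {1..n}" "w r c \<noteq> 0" for r c
    using row[OF that(1)] \<sigma>[OF that(1)] that by blast
  have "w = monomial_mat n \<sigma> x"
  proof (intro ext)
    fix r c
    show "w r c = monomial_mat n \<sigma> x r c"
    proof (cases "r \<in> {1..n} \<and> c \<in> {1..n}")
      case True
      then show ?thesis using \<sigma>_unique[of r c] by (auto simp: monomial_mat_def x_def)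
    next
      case False
      then show ?thesis using outside[OF False] \<sigma>[of r] by (auto simp: monomial_mat_def)
    qed
  qed
  moreover have "inj_on \<sigma> {1..n}"
  proof (rule inj_onI)
    fix a b assume ab: "a \<in> {1..n}" "b \<in> {1..n}" "\<sigma> a = \<sigma> b"
    show "a = b" using col[of "\<sigma> a"] \<sigma>[OF ab(1)] \<sigma>[OF ab(2)] ab by auto
  qed
  moreover have "\<sigma> ` {1..n} \<subseteq> {1..n}" using \<sigma> by auto
  ultimately have "bij_betw \<sigma> {1..n} {1..n}"
    by (simp add: bij_betw_def endo_inj_surj)
  moreover have "{p\<in>{1..n}\<times>{1..n}. w (fst p) (snd p) \<noteq> 0} = (\<lambda>r. (r, \<sigma> r)) ` {1..n}"
  proof (intro set_eqI iffI)
    fix p assume "p \<in> {p\<in>{1..n}\<times>{1..n}. w (fst p) (snd p) \<noteq> 0}"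
    then have "p = (fst p, \<sigma> (fst p))" "fst p \<in> {1..n}" using \<sigma>_unique[of "fst p" "snd p"] by auto
    then show "p \<in> (\<lambda>r. (r, \<sigma> r)) ` {1..n}" by (metis imageI)
  qed (use \<sigma> in auto)
  then have "(\<Prod>r\<in>{1..n}. x r) = 1"
    using prod by (simp add: prod.reindex inj_on_def x_def)
  ultimately show ?thesis
    using that \<open>w = monomial_mat n \<sigma> x\<close> \<sigma> root by (simp add: x_def)
qed

lemma kexp_root_of_unity:
  assumes "1 \<le> e" "a ^ e = 1"
  shows "kexp e a < e \<and> zeta e ^ kexp e a = a"
proof -
  have zeta_pow: "zeta e ^ k = cis (2 * pi * real k / real e)" for k
    unfolding zeta_def DeMoivre by (simp add: field_simps)
  have bij: "bij_betw (\<lambda>k. zeta e ^ k) {..<e} {z. z ^ e = 1}"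
    unfolding zeta_pow by (rule bij_betw_roots_unity) (use assms in simp)
  then have "a \<in> (\<lambda>k. zeta e ^ k) ` {..<e}" using assms(2) by (simp add: bij_betw_def)
  then obtain k where k: "k < e" "zeta e ^ k = a" by auto
  have kexp: "kexp e a = k"
    unfolding kexp_def
  proof (rule the_equality)
    show "k < e \<and> zeta e ^ k = a" using k by simp
    show "k' = k" if "k' < e \<and> zeta e ^ k' = a" for k'
      by (rule inj_onD[OF bij_betw_imp_inj_on[OF bij]]) (use that k in auto)
  qed
  show ?thesis unfolding kexp using k by blast
qed

definition move_down :: "nat \<Rightarrow> nat \<Rightarrow> nat \<Rightarrow> nat" where
  "move_down c i r = (if r = i then c else if c \<le> r \<and> r < i then r + 1 else r)"

definition move_up :: "nat \<Rightarrow> nat \<Rightarrow> nat \<Rightarrow> nat" where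
  "move_up a c r = (if r = a then c else if a < r \<and> r \<le> c then r - 1 else r)"

lemma move_down_image: "1 \<le> c \<Longrightarrow> c \<le> i \<Longrightarrow> i \<le> n \<Longrightarrow> move_down c i ` {1..n} \<subseteq> {1..n}"
  by (auto simp: move_down_def)

lemma word_eval_sg_descending:
  assumes "1 \<le> c" "c \<le> i" "i \<le> n"
  shows "word_eval n (map (sg e n) (rev [c+1..<i+1])) = monomial_mat n (move_down c i) (\<lambda>_. 1)"
  using assms(2,3)
proof (induction i rule: dec_induct)
  case base
  show ?case
    by (simp add: word_eval_Nil ident_eq_monomial_mat) (rule monomial_mat_cong, simp add: move_down_def)
next
  case (step k)
  have "word_eval n (map (sg e n) (rev [c+1..<Suc k+1]))
      = mat_mult n (monomial_mat n (transpose k (Suc k)) (\<lambda>_. 1)) (monomial_mat n (move_down c k) (\<lambda>_. 1))"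
    using step assms(1) by (simp add: word_eval_Cons sg_eq_monomial_mat)
  also have "\<dots> = monomial_mat n (move_down c k \<circ> transpose k (Suc k)) (\<lambda>_. 1)"
  proof -
    have "transpose k (Suc k) ` {1..n} \<subseteq> {1..n}" "move_down c k ` {1..n} \<subseteq> {1..n}"
      using step assms(1) by (auto simp: move_down_def transpose_def)
    from mat_mult_monomial_mat[OF this] show ?thesis by simp
  qed
  also have "\<dots> = monomial_mat n (move_down c (Suc k)) (\<lambda>_. 1)"
    using step by (intro monomial_mat_cong) (auto simp: move_down_def transpose_def)
  finally show ?case .
qed

lemma word_eval_sg_ascending:
  assumes "2 \<le> c" "c \<le> n"
  shows "word_eval n (map (sg e n) [3..<c+1]) = monomial_mat n (move_up 2 c) (\<lambda>_. 1)"
  using assms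
proof (induction c rule: dec_induct)
  case base
  show ?case
    by (simp add: word_eval_Nil ident_eq_monomial_mat) (rule monomial_mat_cong, simp add: move_up_def)
next
  case (step k)
  have "word_eval n (map (sg e n) [3..<Suc k+1])
      = mat_mult n (monomial_mat n (move_up 2 k) (\<lambda>_. 1)) (word_eval n [sg e n (Suc k)])"
    using step by (simp add: word_eval_append)
  also have "\<dots> = mat_mult n (monomial_mat n (move_up 2 k) (\<lambda>_. 1)) (monomial_mat n (transpose k (Suc k)) (\<lambda>_. 1))"
    using step by (simp add: sg_eq_monomial_mat word_eval_monomial_mat_single)
  also have "\<dots> = monomial_mat n (transpose k (Suc k) \<circ> move_up 2 k) (\<lambda>_. 1)"
  proof -
    have "move_up 2 k ` {1..n} \<subseteq> {1..n}" "transpose k (Suc k) ` {1..n} \<subseteq> {1..n}"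
      using step by (auto simp: move_up_def transpose_def)
    from mat_mult_monomial_mat[OF this] show ?thesis by simp
  qed
  also have "\<dots> = monomial_mat n (move_up 2 (Suc k)) (\<lambda>_. 1)"
    using step by (intro monomial_mat_cong) (auto simp: move_up_def transpose_def)
  finally show ?case .
qed

definition corner_scaling :: "nat \<Rightarrow> complex \<Rightarrow> nat \<Rightarrow> complex" where
  "corner_scaling i A r = (if r = i then A else if r = 1 then inverse A else 1)"

lemma tgen_root_eq_monomial_mat:
  assumes "2 \<le> n" "zeta e ^ k = A"
  shows "tgen e n (int k)
    = monomial_mat n (transpose 1 2) (\<lambda>r. if r = 1 then inverse A else if r = 2 then A else 1)"
proof -
  have "zeta e powi (- int k) = inverse A" "zeta e powi int k = A"
    using assms(2) by (simp_all add: power_int_minus)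
  then show ?thesis unfolding tgen_eq_monomial_mat[OF assms(1)] by (simp cong: if_cong)
qed

lemma word_eval_descending_tk:
  assumes i: "2 \<le> i" "i \<le> n" and k: "zeta e ^ k = A"
  shows "word_eval n (map (sg e n) (rev [3..<i+1]) @ [tgen e n (int k)])
    = monomial_mat n (move_down 1 i) (corner_scaling i A)"
proof -
  have "transpose 1 2 ` {1..n} \<subseteq> {1..n}" "move_down 2 i ` {1..n} \<subseteq> {1..n}"
    using i by (auto simp: move_down_def transpose_def)
  then have "word_eval n (map (sg e n) (rev [3..<i+1]) @ [tgen e n (int k)])
      = monomial_mat n (transpose 1 2 \<circ> move_down 2 i)
          (\<lambda>r. 1 * (if move_down 2 i r = 1 then inverse A else if move_down 2 i r = 2 then A else 1))"
    using word_eval_sg_descending[of 2 i n e] tgen_root_eq_monomial_mat[OF _ k] i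
    by (simp add: word_eval_append word_eval_monomial_mat_single mat_mult_monomial_mat)
  also have "\<dots> = monomial_mat n (move_down 1 i) (corner_scaling i A)"
    using i by (intro monomial_mat_cong) (auto simp: move_down_def transpose_def corner_scaling_def)
  finally show ?thesis .
qed

lemma word_eval_descending_tk_t0_ascending:
  assumes c: "2 \<le> c" "c \<le> i" "i \<le> n" and k: "zeta e ^ k = A"
  shows "word_eval n (map (sg e n) (rev [3..<i+1]) @ [tgen e n (int k), tgen e n 0]
      @ map (sg e n) [3..<c+1])
    = monomial_mat n (move_down c i) (corner_scaling i A)"
proof -
  let ?y = "\<lambda>r::nat. if r = 1 then inverse A else if r = 2 then A else 1"
  have img: "transpose 1 2 ` {1..n} \<subseteq> {1..n}" "move_down 2 i ` {1..n} \<subseteq> {1..n}"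
    "move_up 2 c ` {1..n} \<subseteq> {1..n}" "(move_up 2 c \<circ> transpose 1 2) ` {1..n} \<subseteq> {1..n}"
    "(move_up 2 c \<circ> transpose 1 2 \<circ> transpose 1 2) ` {1..n} \<subseteq> {1..n}"
    using c by (auto simp: move_down_def move_up_def transpose_def)
  have "tgen e n 0 = monomial_mat n (transpose 1 2) (\<lambda>_. 1)"
    using c by (simp add: tgen_eq_monomial_mat cong: if_cong)
  then have "word_eval n (map (sg e n) (rev [3..<i+1]) @ [tgen e n (int k), tgen e n 0]
      @ map (sg e n) [3..<c+1])
    = mat_mult n (monomial_mat n (move_down 2 i) (\<lambda>_. 1)) (mat_mult n (monomial_mat n (transpose 1 2) ?y)
        (mat_mult n (monomial_mat n (transpose 1 2) (\<lambda>_. 1)) (monomial_mat n (move_up 2 c) (\<lambda>_. 1))))"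
    using word_eval_sg_descending[of 2 i n e] word_eval_sg_ascending[of c n e]
      tgen_root_eq_monomial_mat[OF _ k] c
    by (simp only: word_eval_append word_eval_Cons append_Cons append_Nil) simp
  also have "\<dots> = monomial_mat n (move_up 2 c \<circ> transpose 1 2 \<circ> transpose 1 2 \<circ> move_down 2 i)
      (\<lambda>r. ?y (move_down 2 i r))"
    using img by (simp add: mat_mult_monomial_mat comp_assoc)
  also have "\<dots> = monomial_mat n (move_down c i) (corner_scaling i A)"
    using c by (intro monomial_mat_cong) (auto simp: move_down_def move_up_def corner_scaling_def)
  finally show ?thesis .
qed

lemma word_eval_Ri:
  assumes i: "2 \<le> i" "i \<le> n" and c: "1 \<le> ci w n i" "ci w n i \<le> i"
    and e: "1 \<le> e" and a: "ai w n i ^ e = 1"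
  shows "word_eval n (Ri e w n i) = monomial_mat n (move_down (ci w n i) i) (corner_scaling i (ai w n i))"
proof -
  define c where "c = ci w n i"
  define A where "A = ai w n i"
  have k: "zeta e ^ kexp e A = A" using kexp_root_of_unity[OF e a] by (simp add: A_def)
  consider "A = 1" | "A \<noteq> 1" "c = 1" | "A \<noteq> 1" "2 \<le> c" using c by (simp add: c_def) linarith
  then have "word_eval n (Ri e w n i) = monomial_mat n (move_down c i) (corner_scaling i A)"
  proof cases
    case 1
    then show ?thesis
      using word_eval_sg_descending[of c i n e] c i
      by (simp add: Ri_def Let_def c_def A_def corner_scaling_def[abs_def] cong: if_cong)
  next
    case 2
    then show ?thesis
      using word_eval_descending_tk[OF i k] by (simp add: Ri_def Let_def c_def A_def)
  next
    case 3
    have "Ri e w n i = map (sg e n) (rev [3..<i+1]) @ [tgen e n (int (kexp e A)), tgen e n 0]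
        @ map (sg e n) [3..<c+1]"
      using 3 by (auto simp: Ri_def Let_def c_def A_def)
    then show ?thesis
      using word_eval_descending_tk_t0_ascending[OF 3(2) _ i(2) k] c by (simp add: c_def)
  qed
  then show ?thesis by (simp add: c_def A_def)
qed

lemma length_Ri:
  "2 \<le> i \<Longrightarrow> 1 \<le> ci w n i \<Longrightarrow> ci w n i \<le> i \<Longrightarrow> length (Ri e w n i) = Li w n i"
  by (auto simp: Ri_def Li_def Let_def)

lemma set_Ri_subset_Xgens:
  assumes "i \<le> n" "1 \<le> ci w n i" "ci w n i \<le> i" "1 \<le> e" "ai w n i ^ e = 1"
  shows "set (Ri e w n i) \<subseteq> Xgens e n"
proof -
  have "sg e n j \<in> Xgens e n" if "2 \<le> j" "j \<le> n" for j
    using that assms(4) unfolding sg_def Xgens_def by (auto intro: exI[of _ 0])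
  moreover have "tgen e n (int k) \<in> Xgens e n" if "k < e" for k
    using that unfolding Xgens_def by auto
  moreover have "tgen e n 0 \<in> Xgens e n"
    using assms(4) unfolding Xgens_def by (auto intro: exI[of _ 0])
  ultimately show ?thesis
    using assms kexp_root_of_unity[OF assms(4,5)] by (auto simp: Ri_def Let_def)
qed

locale monomial_prod_one =
  fixes n :: nat and \<sigma> :: "nat \<Rightarrow> nat" and x :: "nat \<Rightarrow> complex"
  assumes perm: "bij_betw \<sigma> {1..n} {1..n}"
    and nonzero: "\<And>r. r \<in> {1..n} \<Longrightarrow> x r \<noteq> 0"
    and prod_eq_1: "(\<Prod>r\<in>{1..n}. x r) = 1"
begin

text \<open>
  block i i is the matrix w_i of the recursion, and block n i is w_i extended by the identity.
  The first column of w_i carries the product tail_prod i of the entries of the deleted rows.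
\<close>

definition tail_prod :: "nat \<Rightarrow> complex" where
  "tail_prod i = (\<Prod>r\<in>{Suc i..n}. x r)"

definition block_col :: "nat \<Rightarrow> nat \<Rightarrow> nat" where
  "block_col i r = (if r \<le> i then rank_le \<sigma> i (\<sigma> r) else r)"

definition block_entry :: "nat \<Rightarrow> nat \<Rightarrow> complex" where
  "block_entry i r = (if r \<le> i then x r * (if rank_le \<sigma> i (\<sigma> r) = 1 then tail_prod i else 1) else 1)"

abbreviation block :: "nat \<Rightarrow> nat \<Rightarrow> cmat" where
  "block m i \<equiv> monomial_mat m (block_col i) (block_entry i)"

lemma tail_prod_nonzero: "tail_prod i \<noteq> 0"
  using nonzero by (auto simp: tail_prod_def prod_zero_iff)

lemma tail_prod_pred: "1 \<le> i \<Longrightarrow> i \<le> n \<Longrightarrow> tail_prod (i-1) = x i * tail_prod i"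
  unfolding tail_prod_def using prod.atLeast_Suc_atMost[of i n x] by simp

lemma reduced_entry_eq:
  assumes "1 \<le> i" "i \<le> n"
  shows "reduced_entry \<sigma> x i = x i * (if col_rank \<sigma> i = 1 then tail_prod i else 1)"
proof (cases "col_rank \<sigma> i = 1")
  case True
  have "(\<Prod>l\<in>{1..<i}. x l) * (\<Prod>l\<in>{i..<Suc n}. x l) = (\<Prod>l\<in>{1..<Suc n}. x l)"
    using assms by (intro prod.atLeastLessThan_concat) auto
  moreover have "(\<Prod>l\<in>{i..<Suc n}. x l) = x i * tail_prod i"
    unfolding tail_prod_def using assms prod.atLeast_Suc_atMost[of i n x]
    by (simp add: atLeastLessThanSuc_atLeastAtMost)
  ultimately have "(\<Prod>l\<in>{1..<i}. x l) * (x i * tail_prod i) = 1"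
    using prod_eq_1 by (simp add: atLeastLessThanSuc_atLeastAtMost)
  then show ?thesis using True by (simp add: reduced_entry_def inverse_unique)
qed (simp add: reduced_entry_def)

lemma reduced_entry_nonzero: "1 \<le> i \<Longrightarrow> i \<le> n \<Longrightarrow> reduced_entry \<sigma> x i \<noteq> 0"
  using nonzero tail_prod_nonzero by (simp add: reduced_entry_eq)

lemma reduced_entry_root:
  assumes "1 \<le> i" "i \<le> n" and root: "\<And>r. r \<in> {1..n} \<Longrightarrow> x r ^ e = 1"
  shows "reduced_entry \<sigma> x i ^ e = 1"
proof -
  have "tail_prod i ^ e = 1"
    unfolding tail_prod_def prod_power_distrib using root assms by (intro prod.neutral) auto
  then show ?thesis using root[of i] assms by (simp add: reduced_entry_eq power_mult_distrib)
qed

lemma rank_le_pred: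
  assumes i: "2 \<le> i" "i \<le> n" and r: "r \<in> {1..i-1}"
  shows "rank_le \<sigma> i (\<sigma> r) = move_down (col_rank \<sigma> i) i (rank_le \<sigma> (i-1) (\<sigma> r))"
proof -
  define Q where "Q = rank_le \<sigma> (i-1) (\<sigma> r)"
  have iS: "i = Suc (i-1)" using i by simp
  have c: "col_rank \<sigma> i = rank_le \<sigma> (i-1) (\<sigma> i) + 1"
    using col_rank_Suc[of \<sigma> "i-1"] iS by simp
  have e: "rank_le \<sigma> i (\<sigma> r) = Q + (if \<sigma> i \<le> \<sigma> r then 1 else 0)"
    using rank_le_Suc[of \<sigma> "i-1" "\<sigma> r"] iS by (simp add: Q_def)
  have "Q < i" using rank_le_le[of \<sigma> "i-1" "\<sigma> r"] i by (simp add: Q_def)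
  have "\<sigma> r \<noteq> \<sigma> i"
  proof
    assume "\<sigma> r = \<sigma> i"
    then have "r = i" by (rule bij_betw_imp_inj_on[OF perm, THEN inj_onD]) (use r i in auto)
    then show False using r by (simp, arith)
  qed
  then consider "\<sigma> i < \<sigma> r" | "\<sigma> r < \<sigma> i" by linarith
  then show ?thesis
  proof cases
    case 1
    then have "rank_le \<sigma> (i-1) (\<sigma> i) < Q" unfolding Q_def by (rule rank_le_strict_mono[OF r])
    then show ?thesis using 1 c e \<open>Q < i\<close> by (simp add: move_down_def Q_def)
  next
    case 2
    then have "Q \<le> rank_le \<sigma> (i-1) (\<sigma> i)" unfolding Q_def by (intro rank_le_mono) simp
    then show ?thesis using 2 c e \<open>Q < i\<close> by (simp add: move_down_def Q_def)
  qed
qed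

lemma block_col_pred:
  assumes "2 \<le> i" "i \<le> n" "r \<in> {1..i-1}"
  shows "block_col i r = move_down (col_rank \<sigma> i) i (block_col (i-1) r)"
proof -
  have "r \<le> i - 1" "r \<le> i" using assms by auto
  then show ?thesis using rank_le_pred[OF assms] by (simp add: block_col_def)
qed

lemma block_col_diag: "block_col i i = col_rank \<sigma> i"
  by (simp add: block_col_def col_rank_def)

lemma block_entry_diag: "1 \<le> i \<Longrightarrow> i \<le> n \<Longrightarrow> block_entry i i = reduced_entry \<sigma> x i"
  by (simp add: block_entry_def reduced_entry_eq col_rank_def)

lemma block_entry_pred:
  assumes i: "2 \<le> i" "i \<le> n" and r: "r \<in> {1..i-1}"
  shows "block_entry (i-1) r
    = block_entry i r * (if block_col (i-1) r = 1 then reduced_entry \<sigma> x i else 1)"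
proof -
  define Q where "Q = rank_le \<sigma> (i-1) (\<sigma> r)"
  define c where "c = col_rank \<sigma> i"
  have Q: "Q \<in> {1..i-1}" unfolding Q_def by (rule rank_le_in_range[OF r])
  have "c \<in> {1..i}" unfolding c_def using col_rank_in_range[of i \<sigma>] i by simp
  then have "move_down c i Q = 1 \<longleftrightarrow> Q = 1 \<and> c \<noteq> 1"
    using Q by (auto simp: move_down_def)
  moreover have "rank_le \<sigma> i (\<sigma> r) = move_down c i Q"
    unfolding Q_def c_def by (rule rank_le_pred[OF i r])
  moreover have "r \<le> i - 1" "r \<le> i" using r i by auto
  ultimately have be: "block_entry (i-1) r = x r * (if Q = 1 then tail_prod (i-1) else 1)"
      "block_entry i r = x r * (if Q = 1 \<and> c \<noteq> 1 then tail_prod i else 1)"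
      "block_col (i-1) r = Q"
    by (simp_all add: block_entry_def block_col_def Q_def)
  have "tail_prod (i-1) = x i * tail_prod i" using i by (intro tail_prod_pred) auto
  moreover have "reduced_entry \<sigma> x i = x i * (if c = 1 then tail_prod i else 1)"
    using i by (simp add: reduced_entry_eq c_def)
  ultimately show ?thesis
    unfolding be by (cases "Q = 1"; cases "c = 1") (simp_all add: mult_ac)
qed

lemma block_n: "block n n = monomial_mat n \<sigma> x"
proof (rule monomial_mat_cong)
  fix r assume r: "r \<in> {1..n}"
  have img: "\<sigma> ` {1..n} = {1..n}" using perm by (simp add: bij_betw_def)
  have "\<sigma> ` {l \<in> {1..n}. \<sigma> l \<le> \<sigma> r} = {v \<in> \<sigma> ` {1..n}. v \<le> \<sigma> r}" by auto
  also have "\<dots> = {1..\<sigma> r}"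
  proof -
    have "\<sigma> r \<le> n" using img r by (metis atLeastAtMost_iff imageI)
    then show ?thesis using img by auto
  qed
  moreover have "inj_on \<sigma> {l \<in> {1..n}. \<sigma> l \<le> \<sigma> r}"
    using bij_betw_imp_inj_on[OF perm] by (rule inj_on_subset) auto
  ultimately have "rank_le \<sigma> n (\<sigma> r) = \<sigma> r"
    unfolding rank_le_def by (metis card_atLeastAtMost card_image diff_Suc_1)
  then show "block_col n r = \<sigma> r \<and> block_entry n r = x r"
    using r by (simp add: block_col_def block_entry_def tail_prod_def)
qed

lemma block_1: "1 \<le> n \<Longrightarrow> block n 1 = ident n"
  unfolding ident_eq_monomial_mat
proof (rule monomial_mat_cong)
  fix r assume "1 \<le> n" "r \<in> {1..n}"
  moreover have "{l \<in> {1..1}. \<sigma> l \<le> \<sigma> 1} = {1}" by auto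
  then have "rank_le \<sigma> 1 (\<sigma> 1) = 1" unfolding rank_le_def by simp
  moreover have "x 1 * tail_prod 1 = 1"
    unfolding tail_prod_def using prod_eq_1 prod.atLeast_Suc_atMost[of 1 n x] \<open>1 \<le> n\<close> by simp
  ultimately show "block_col 1 r = id r \<and> block_entry 1 r = 1"
    by (auto simp: block_col_def block_entry_def)
qed

lemma colidx_block:
  assumes "1 \<le> i" "i \<le> n"
  shows "colidx i (block i i) = col_rank \<sigma> i"
  unfolding colidx_def
proof (rule the_equality)
  have "block_entry i i \<noteq> 0" using assms reduced_entry_nonzero by (simp add: block_entry_diag)
  then show "col_rank \<sigma> i \<in> {1..i} \<and> block i i i (col_rank \<sigma> i) \<noteq> 0"
    using assms col_rank_in_range[of i \<sigma>] by (simp add: monomial_mat_def block_col_diag)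
qed (use assms in \<open>simp add: monomial_mat_def block_col_diag split: if_splits\<close>)

lemma reduce_block:
  assumes i: "2 \<le> i" "i \<le> n"
  shows "reduce i (block i i) = block (i-1) (i-1)"
proof (intro ext)
  fix r q
  define c where "c = col_rank \<sigma> i"
  have c: "c \<in> {1..i}" unfolding c_def using col_rank_in_range[of i \<sigma>] i by simp
  show "reduce i (block i i) r q = block (i-1) (i-1) r q"
  proof (cases "r \<in> {1..i-1} \<and> q \<in> {1..i-1}")
    case True
    then have r: "r \<in> {1..i-1}" by simp
    have "(if q < c then q else q + 1) = move_down c i q" using True i by (auto simp: move_down_def)
    moreover have "move_down c i q = move_down c i (block_col (i-1) r) \<longleftrightarrow> q = block_col (i-1) r"
      using True c rank_le_in_range[OF r, of \<sigma>] by (auto simp: move_down_def block_col_def)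
    ultimately have "block i i r (if q < c then q else q + 1)
        = (if q = block_col (i-1) r then block_entry i r else 0)"
      using True i block_col_pred[OF i r, folded c_def] by (auto simp: monomial_mat_def)
    moreover have "block i i i c = reduced_entry \<sigma> x i"
      using i by (simp add: monomial_mat_def block_col_diag block_entry_diag c_def)
    moreover have "colidx i (block i i) = c" using i by (simp add: colidx_block c_def)
    ultimately have "reduce i (block i i) r q = (if q = block_col (i-1) r
        then block_entry i r * (if q = 1 then reduced_entry \<sigma> x i else 1) else 0)"
      using True by (simp add: reduce_def Let_def)
    then show ?thesis using True block_entry_pred[OF i r] by (simp add: monomial_mat_def)
  next
    case False
    have "reduce i (block i i) r q = 0" by (simp only: reduce_def Let_def if_not_P[OF False])
    moreover have "block (i-1) (i-1) r q = 0"
      using False rank_le_in_range[of r "i-1" \<sigma>] by (auto simp: monomial_mat_def block_col_def)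
    ultimately show ?thesis by simp
  qed
qed

lemma wi_eq_block:
  assumes "w = monomial_mat n \<sigma> x" "1 \<le> i" "i \<le> n"
  shows "wi w n i = block i i"
proof -
  have "down w n d = block (n - d) (n - d)" if "d < n" for d
    using that
  proof (induction d)
    case 0
    then show ?case using assms(1) block_n by simp
  next
    case (Suc d)
    then have "down w n (Suc d) = reduce (n - d) (block (n - d) (n - d))" by simp
    also have "\<dots> = block (n - Suc d) (n - Suc d)"
      using reduce_block[of "n - d"] Suc.prems by (simp add: Suc_diff_Suc)
    finally show ?case .
  qed
  then show ?thesis using assms by (simp add: wi_def)
qed

lemma ci_eq: "w = monomial_mat n \<sigma> x \<Longrightarrow> 1 \<le> i \<Longrightarrow> i \<le> n \<Longrightarrow> ci w n i = col_rank \<sigma> i"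
  by (simp add: ci_def wi_eq_block colidx_block)

lemma ai_eq: "w = monomial_mat n \<sigma> x \<Longrightarrow> 1 \<le> i \<Longrightarrow> i \<le> n \<Longrightarrow> ai w n i = reduced_entry \<sigma> x i"
  by (simp add: ai_def ci_eq wi_eq_block monomial_mat_def block_col_diag block_entry_diag)

end

context monomial_prod_one
begin

lemma block_step:
  assumes i: "2 \<le> i" "i \<le> n"
  shows "mat_mult n (block n (i-1))
      (monomial_mat n (move_down (col_rank \<sigma> i) i) (corner_scaling i (reduced_entry \<sigma> x i)))
    = block n i" (is "mat_mult n _ (monomial_mat n _ ?z) = _")
proof -
  define c where "c = col_rank \<sigma> i"
  define A where "A = reduced_entry \<sigma> x i"
  have c: "c \<in> {1..i}" unfolding c_def using col_rank_in_range[of i \<sigma>] i by simp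
  have "A \<noteq> 0" unfolding A_def using reduced_entry_nonzero i by simp
  have "block_col (i-1) ` {1..n} \<subseteq> {1..n}"
    using i rank_le_in_range[of _ "i-1" \<sigma>] by (fastforce simp: block_col_def)
  moreover have "move_down c i ` {1..n} \<subseteq> {1..n}" using c i by (intro move_down_image) auto
  ultimately have "mat_mult n (block n (i-1)) (monomial_mat n (move_down c i) ?z)
      = monomial_mat n (move_down c i \<circ> block_col (i-1)) (\<lambda>r. block_entry (i-1) r * ?z (block_col (i-1) r))"
    by (rule mat_mult_monomial_mat)
  also have "\<dots> = block n i"
  proof (rule monomial_mat_cong)
    fix r assume r: "r \<in> {1..n}"
    consider "r < i" | "r = i" | "i < r" by linarith
    then show "(move_down c i \<circ> block_col (i-1)) r = block_col i r
      \<and> block_entry (i-1) r * ?z (block_col (i-1) r) = block_entry i r"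
    proof cases
      case 1
      then have r': "r \<in> {1..i-1}" using r by auto
      then have "block_col (i-1) r \<in> {1..i-1}"
        using rank_le_in_range[OF r'] by (simp add: block_col_def)
      then show ?thesis
        using block_col_pred[OF i r'] block_entry_pred[OF i r'] \<open>A \<noteq> 0\<close>
        by (auto simp: c_def A_def corner_scaling_def)
    next
      case 2
      have "\<not> i \<le> i - 1" using i by simp
      then have "block_col (i-1) i = i" "block_entry (i-1) i = 1"
        by (simp_all add: block_col_def block_entry_def)
      then show ?thesis
        using 2 i by (simp add: move_down_def block_col_diag block_entry_diag c_def corner_scaling_def)
    next
      case 3
      then have "\<not> r \<le> i - 1" "\<not> r \<le> i" by simp_all
      then have "block_col (i-1) r = r" "block_entry (i-1) r = 1" "block_col i r = r" "block_entry i r = 1"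
        by (simp_all add: block_col_def block_entry_def)
      then show ?thesis using 3 i by (simp add: move_down_def corner_scaling_def)
    qed
  qed
  finally show ?thesis by (simp add: c_def)
qed

lemma word_eval_Ri_prefix:
  assumes w: "w = monomial_mat n \<sigma> x" and e: "1 \<le> e" and root: "\<And>r. r \<in> {1..n} \<Longrightarrow> x r ^ e = 1"
    and i: "1 \<le> i" "i \<le> n"
  shows "word_eval n (concat (map (Ri e w n) [2..<i+1])) = block n i"
  using i
proof (induction i rule: dec_induct)
  case base
  then show ?case using block_1 by (simp add: word_eval_Nil)
next
  case (step k)
  have k: "2 \<le> Suc k" "Suc k \<le> n" using step by auto
  have "[2..<Suc k + 1] = [2..<k+1] @ [Suc k]" using step by simp
  then have "word_eval n (concat (map (Ri e w n) [2..<Suc k+1]))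
      = mat_mult n (block n k) (word_eval n (Ri e w n (Suc k)))"
    using step by (simp add: word_eval_append)
  also have "word_eval n (Ri e w n (Suc k))
      = monomial_mat n (move_down (col_rank \<sigma> (Suc k)) (Suc k)) (corner_scaling (Suc k) (reduced_entry \<sigma> x (Suc k)))"
  proof -
    have "ci w n (Suc k) = col_rank \<sigma> (Suc k)" "ai w n (Suc k) = reduced_entry \<sigma> x (Suc k)"
      using k by (simp_all add: ci_eq[OF w] ai_eq[OF w])
    from word_eval_Ri[OF k, of w e, unfolded this] show ?thesis
      using e k col_rank_in_range[of "Suc k" \<sigma>] reduced_entry_root[of "Suc k" e] root by simp
  qed
  also have "mat_mult n (block n k) \<dots> = block n (Suc k)"
    using block_step[OF k] by simp
  finally show ?case .
qed

lemma Ri_concat: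
  assumes w: "w = monomial_mat n \<sigma> x" and e: "1 \<le> e" and root: "\<And>r. r \<in> {1..n} \<Longrightarrow> x r ^ e = 1"
    and n: "2 \<le> n"
  defines "W \<equiv> concat (map (Ri e w n) [2..<n+1])"
  shows "word_eval n W = w" and "set W \<subseteq> Xgens e n"
    and "length W = (\<Sum>i=2..n. Li w n i)" and "(\<Sum>i=2..n. Li w n i) = length_sum n \<sigma> x"
proof -
  have c: "1 \<le> ci w n i" "ci w n i \<le> i" and a: "ai w n i ^ e = 1" if "i \<in> {2..n}" for i
    using that col_rank_in_range[of i \<sigma>] reduced_entry_root[of i e] root
    by (auto simp: ci_eq[OF w] ai_eq[OF w])
  show "word_eval n W = w"
    using word_eval_Ri_prefix[OF w e root, of n] n block_n w by (simp add: W_def)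
  have "set (Ri e w n i) \<subseteq> Xgens e n" if "i \<in> {2..n}" for i
    using set_Ri_subset_Xgens[of i n w e] c[OF that] a[OF that] that e by simp
  then show "set W \<subseteq> Xgens e n"
    unfolding W_def by (force simp: atLeastLessThanSuc_atLeastAtMost[symmetric])
  have "length W = (\<Sum>i\<leftarrow>[2..<n+1]. length (Ri e w n i))"
    by (simp add: W_def length_concat comp_def)
  also have "\<dots> = (\<Sum>i\<in>{2..<n+1}. length (Ri e w n i))"
    by (simp only: sum_set_upt_conv_sum_list_nat[symmetric] set_upt)
  also have "\<dots> = (\<Sum>i=2..n. Li w n i)"
    using length_Ri c by (intro sum.cong) auto
  finally show "length W = (\<Sum>i=2..n. Li w n i)" .
  show "(\<Sum>i=2..n. Li w n i) = length_sum n \<sigma> x"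
    unfolding length_sum_def
    by (intro sum.cong) (auto simp: Li_def length_term_def step_length_def ci_eq[OF w] ai_eq[OF w])
qed

end

lemma len_reduced_exprI:
  assumes "set ws \<subseteq> Xgens e n" "word_eval n ws = w"
    and "\<And>ws'. set ws' \<subseteq> Xgens e n \<Longrightarrow> word_eval n ws' = w \<Longrightarrow> length ws \<le> length ws'"
  shows "len e n w = length ws \<and> reduced_expr e n w ws"
proof -
  have "len e n w = length ws"
    unfolding len_def using assms by (intro Least_equality) auto
  then show ?thesis using assms by (simp add: reduced_expr_def)
qed

theorem mainTheorem1:
  fixes e n :: nat and w :: cmat
  assumes "e \<ge> 2" and "n \<ge> 2" and "w \<in> Geen e n"
  shows "len e n w = (\<Sum>i=2..n. Li w n i)
    \<and> reduced_expr e n w (concat (map (Ri e w n) [2..<n+1]))"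
proof -
  obtain \<sigma> x where w: "w = monomial_mat n \<sigma> x" and perm: "bij_betw \<sigma> {1..n} {1..n}"
    and x: "\<And>r. r \<in> {1..n} \<Longrightarrow> x r \<noteq> 0 \<and> x r ^ e = 1" and prod: "(\<Prod>r\<in>{1..n}. x r) = 1"
    using Geen_obtain_monomial_mat[OF assms(3)] by blast
  interpret monomial_prod_one n \<sigma> x using perm x prod by unfold_locales auto
  have e: "1 \<le> e" using assms(1) by simp
  note W = Ri_concat[OF w e _ assms(2)] x
  have "length_sum n \<sigma> x \<le> length ws"
    if "set ws \<subseteq> Xgens e n" "word_eval n ws = w" for ws
    using length_sum_le_word_length[OF that(1) assms(2)] that(2) w x by blast
  then show ?thesis
    using len_reduced_exprI[of "concat (map (Ri e w n) [2..<n+1])" e n w] W by simp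
qed

end
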